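(* Let $0<\rho<\mu$, let $\beta$ be the unique real with $\rho(\beta)=\rho$, let $\ell\in\mathbb{N}$ be such that $t=\ell\rho$ is an integer, and let $0<\varepsilon<1$. Let $X_\beta$ have distribution $P_\beta$ and set $$\delta=\ell^{1/2}\,\frac{\mathrm{Var}(\mathrm{wt}_{\mathcal{A}}(X_\beta))^{1/2}}{(1-\varepsilon)^{1/2}},$$ and assume $\delta>0$. Then $$\max_{\substack{j\in\mathbb{Z}\\ -\delta<j<\delta}}\frac{1}{\ell}\log_q\bigl|\mathcal{S}^\ell_{t+j}\bigr|\ \ge\ H_\rho-\frac{|\beta|\delta}{\ell}-\frac{1}{\ell}\log_q\!\left(\frac{2\lceil\delta\rceil-1}{\varepsilon}\right).$$ Moreover, for fixed $\rho$ and $\varepsilon$, the right-hand side converges to $H_\rho$ as $\ell\to\infty$ (along $\ell$ with $\ell\rho\in\mathbb{Z}$).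
   Context: Let $q>1$ be fixed. Let $\mathcal{A}$ be a finite abelian group with $|\mathcal{A}|\ge 2$ and $\mathrm{wt}_{\mathcal{A}}:\mathcal{A}\to\mathbb{Z}_{\ge 0}$ a weight function with $\mathrm{wt}_{\mathcal{A}}(a)=0$ iff $a=0$, extended additively to $\mathcal{A}^\ell$ by $\mathrm{wt}_{\Sigma\mathcal{A}}(v)=\sum_{i=1}^\ell\mathrm{wt}_{\mathcal{A}}(v_i)$. For an integer $s$, $\mathcal{S}^\ell_s=\{v\in\mathcal{A}^\ell:\mathrm{wt}_{\Sigma\mathcal{A}}(v)=s\}$. Let $\mu=\max_a\mathrm{wt}_{\mathcal{A}}(a)$. For $\beta\in\mathbb{R}$ let $P_\beta(a)=q^{-\beta\,\mathrm{wt}_{\mathcal{A}}(a)}/\mathcal{Z}(\beta)$, $\mathcal{Z}(\beta)=\sum_aq^{-\beta\,\mathrm{wt}_{\mathcal{A}}(a)}$, $\rho(\beta)=\sum_aP_\beta(a)\mathrm{wt}_{\mathcal{A}}(a)$; $\rho$ is a bijection $\mathbb{R}\to(0,\mu)$. For $\rho=\rho(\beta)$, $H_\rho=-\sum_{a:P_\beta(a)\ne0}P_\beta(a)\log_qP_\beta(a)$. Convention: $\log_q 0=-\infty$. *)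

theory Defs
  imports "HOL-Analysis.Analysis"
begin

text \<open>The alphabet is a finite abelian group, rendered as a type of classes
finite and ab_group_add; the weight is wt :: 'a => nat.  Words of length l are
lists of length l.\<close>

definition wt_sum :: "('a \<Rightarrow> nat) \<Rightarrow> 'a list \<Rightarrow> nat" where
  "wt_sum wt v = (\<Sum>i<length v. wt (v ! i))"

definition sphere :: "('a \<Rightarrow> nat) \<Rightarrow> nat \<Rightarrow> int \<Rightarrow> 'a list set" where
  "sphere wt l s = {v. length v = l \<and> int (wt_sum wt v) = s}"

definition mu :: "('a::finite \<Rightarrow> nat) \<Rightarrow> nat" where
  "mu wt = Max (range wt)"

definition partZ :: "real \<Rightarrow> ('a::finite \<Rightarrow> nat) \<Rightarrow> real \<Rightarrow> real" where
  "partZ q wt \<beta> = (\<Sum>a\<in>UNIV. q powr (- \<beta> * real (wt a)))"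

definition Pbeta :: "real \<Rightarrow> ('a::finite \<Rightarrow> nat) \<Rightarrow> real \<Rightarrow> 'a \<Rightarrow> real" where
  "Pbeta q wt \<beta> a = q powr (- \<beta> * real (wt a)) / partZ q wt \<beta>"

definition rho_of :: "real \<Rightarrow> ('a::finite \<Rightarrow> nat) \<Rightarrow> real \<Rightarrow> real" where
  "rho_of q wt \<beta> = (\<Sum>a\<in>UNIV. Pbeta q wt \<beta> a * real (wt a))"

definition entropy_of :: "real \<Rightarrow> ('a::finite \<Rightarrow> nat) \<Rightarrow> real \<Rightarrow> real" where
  "entropy_of q wt \<beta> =
     - (\<Sum>a\<in>{a. Pbeta q wt \<beta> a \<noteq> 0}. Pbeta q wt \<beta> a * log q (Pbeta q wt \<beta> a))"

definition var_of :: "real \<Rightarrow> ('a::finite \<Rightarrow> nat) \<Rightarrow> real \<Rightarrow> real" where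
  "var_of q wt \<beta> = (\<Sum>a\<in>UNIV. Pbeta q wt \<beta> a * (real (wt a) - rho_of q wt \<beta>)\<^sup>2)"

definition delta_of :: "real \<Rightarrow> ('a::finite \<Rightarrow> nat) \<Rightarrow> real \<Rightarrow> real \<Rightarrow> nat \<Rightarrow> real" where
  "delta_of q wt \<beta> \<epsilon> l = sqrt (real l) * sqrt (var_of q wt \<beta>) / sqrt (1 - \<epsilon>)"

definition rhs_bound :: "real \<Rightarrow> ('a::finite \<Rightarrow> nat) \<Rightarrow> real \<Rightarrow> real \<Rightarrow> nat \<Rightarrow> real" where
  "rhs_bound q wt \<beta> \<epsilon> l =
     entropy_of q wt \<beta> - \<bar>\<beta>\<bar> * delta_of q wt \<beta> \<epsilon> l / real l
     - log q ((2 * real_of_int \<lceil>delta_of q wt \<beta> \<epsilon> l\<rceil> - 1) / \<epsilon>) / real l"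

end

theory Submission
  imports Defs "HOL-Real_Asymp.Real_Asymp"
begin

(* Let X_1, ..., X_l be independent with law P_beta and W their total weight. W has mean t = l rho
   and variance l Var(wt X_beta) = (1 - eps) delta^2, so by Chebyshev W lies in the window
   |W - t| < delta with probability at least eps. The window contains 2 ceil(delta) - 1 integers,
   hence one sphere S_(t+j) has probability at least eps / (2 ceil(delta) - 1). Every word of weight s
   has probability q^(-beta s) / Z^l, and l H_rho = beta t + l log_q Z, which turns this into the bound.
   As delta grows like sqrt l, the error terms are O(l^(-1/2)) and O(log l / l).
   Sums over words are taken with the unnormalised weights q^(-beta wt), so that they factor as powers of Z. *)

lemma wt_sum_eq_sum_list: "wt_sum wt v = sum_list (map wt v)"
  unfolding wt_sum_def by (simp add: sum_list_sum_nth atLeast0LessThan)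

lemma finite_lists_length: "finite {v :: 'a::finite list. length v = n}"
  using finite_lists_length_eq[of "UNIV :: 'a set" n] by simp

lemma sum_lists_length_Suc:
  fixes f :: "'a::finite list \<Rightarrow> 'b::comm_monoid_add"
  shows "(\<Sum>v | length v = Suc n. f v) = (\<Sum>a\<in>UNIV. \<Sum>v | length v = n. f (a # v))"
proof -
  have eq: "{v::'a list. length v = Suc n} = (\<lambda>(a, v). a # v) ` (UNIV \<times> {v. length v = n})"
    by (auto simp: length_Suc_conv image_iff)
  have "inj_on (\<lambda>(a, v). a # v) (UNIV \<times> {v::'a list. length v = n})"
    by (auto simp: inj_on_def)
  then show ?thesis
    unfolding eq by (simp add: sum.reindex sum.cartesian_product split_def)
qed

lemma sum_lists_prod_list:
  fixes e :: "'a::finite \<Rightarrow> 'b::comm_semiring_1"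
  shows "(\<Sum>v | length v = n. prod_list (map e v)) = (\<Sum>a\<in>UNIV. e a) ^ n"
proof (induction n)
  case (Suc n)
  then show ?case
    by (simp add: sum_lists_length_Suc sum_product[symmetric])
qed simp

(* Additivity of the variance over independent letters, with unnormalised weights e. *)
lemma sum_lists_prod_list_centered_sq:
  fixes e f :: "'a::finite \<Rightarrow> real"
  assumes centered: "(\<Sum>a\<in>UNIV. e a * (f a - r)) = 0"
  shows "(\<Sum>v | length v = n. prod_list (map e v) * (sum_list (map f v) - n * r)\<^sup>2)
         = n * (\<Sum>a\<in>UNIV. e a * (f a - r)\<^sup>2) * (\<Sum>a\<in>UNIV. e a) ^ (n - 1)"
proof (induction n)
  case (Suc n)
  define L where "L = {v::'a list. length v = n}"
  define E where "E v = prod_list (map e v)" for v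
  define D where "D v = sum_list (map f v) - n * r" for v
  define V where "V = (\<Sum>a\<in>UNIV. e a * (f a - r)\<^sup>2)"
  define Z where "Z = (\<Sum>a\<in>UNIV. e a)"
  have "(\<Sum>v | length v = Suc n. E v * (sum_list (map f v) - Suc n * r)\<^sup>2)
      = (\<Sum>a\<in>UNIV. \<Sum>v\<in>L. e a * (f a - r)\<^sup>2 * E v + (2 * (e a * (f a - r))) * (E v * D v)
                          + e a * (E v * (D v)\<^sup>2))"
    unfolding sum_lists_length_Suc L_def
    by (intro sum.cong refl) (simp add: E_def D_def power2_eq_square algebra_simps)
  also have "\<dots> = V * (\<Sum>v\<in>L. E v) + 2 * (\<Sum>a\<in>UNIV. e a * (f a - r)) * (\<Sum>v\<in>L. E v * D v)
                 + Z * (\<Sum>v\<in>L. E v * (D v)\<^sup>2)"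
    by (simp add: sum.distrib sum_distrib_left sum_distrib_right V_def Z_def mult_ac sum.swap[of _ UNIV L])
  also have "\<dots> = Suc n * V * Z ^ n"
    using Suc.IH centered sum_lists_prod_list[of e n]
    by (cases n) (simp_all add: L_def E_def D_def V_def Z_def algebra_simps)
  finally show ?case by (simp add: E_def V_def Z_def)
qed simp

lemma partZ_pos: "q > 0 \<Longrightarrow> partZ q wt \<beta> > 0"
  unfolding partZ_def by (intro sum_pos) auto

lemma Pbeta_pos: "q > 0 \<Longrightarrow> Pbeta q wt \<beta> a > 0"
  unfolding Pbeta_def by (intro divide_pos_pos) (simp_all add: partZ_pos)

lemma powr_wt_sum:
  assumes "q > 0"
  shows "q powr (- \<beta> * real (wt_sum wt v)) = prod_list (map (\<lambda>a. q powr (- \<beta> * real (wt a))) v)"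
proof (induction v)
  case (Cons a v)
  have "- \<beta> * real (wt_sum wt (a # v)) = - \<beta> * real (wt a) + - \<beta> * real (wt_sum wt v)"
    by (simp add: wt_sum_eq_sum_list algebra_simps)
  with Cons show ?case
    by (simp only: powr_add list.map prod_list.Cons)
qed (use assms in \<open>simp add: wt_sum_eq_sum_list\<close>)

lemma sum_words_tilted_weight:
  assumes "q > 0"
  shows "(\<Sum>v | length v = n. q powr (- \<beta> * real (wt_sum wt v))) = partZ q wt \<beta> ^ n"
  unfolding powr_wt_sum[OF assms] sum_lists_prod_list partZ_def ..

lemma sum_tilted_weight_mult_wt:
  assumes "q > 0"
  shows "(\<Sum>a\<in>UNIV. q powr (- \<beta> * real (wt a)) * real (wt a)) = rho_of q wt \<beta> * partZ q wt \<beta>"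
  using partZ_pos[OF assms, of wt \<beta>]
  by (simp add: rho_of_def Pbeta_def sum_distrib_right)

lemma sum_tilted_weight_sq_deviation:
  assumes "q > 0"
  shows "(\<Sum>a\<in>UNIV. q powr (- \<beta> * real (wt a)) * (real (wt a) - rho_of q wt \<beta>)\<^sup>2)
         = var_of q wt \<beta> * partZ q wt \<beta>"
  using partZ_pos[OF assms, of wt \<beta>]
  by (simp add: var_of_def Pbeta_def sum_distrib_right)

lemma sum_words_tilted_sq_deviation:
  assumes q: "q > 0"
  shows "(\<Sum>v | length v = n. q powr (- \<beta> * real (wt_sum wt v)) * (real (wt_sum wt v) - n * rho_of q wt \<beta>)\<^sup>2)
         = n * var_of q wt \<beta> * partZ q wt \<beta> ^ n"
proof -
  let ?e = "\<lambda>a. q powr (- \<beta> * real (wt a))" and ?f = "\<lambda>a. real (wt a)"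
  have centered: "(\<Sum>a\<in>UNIV. ?e a * (?f a - rho_of q wt \<beta>)) = 0"
    using sum_tilted_weight_mult_wt[OF q, of \<beta> wt]
    by (simp add: right_diff_distrib sum_subtractf partZ_def flip: sum_distrib_right)
  have real_wt_sum: "real (wt_sum wt v) = sum_list (map ?f v)" for v
    by (induction v) (simp_all add: wt_sum_eq_sum_list)
  have "(\<Sum>v | length v = n. q powr (- \<beta> * real (wt_sum wt v)) * (real (wt_sum wt v) - n * rho_of q wt \<beta>)\<^sup>2)
      = (\<Sum>v | length v = n. prod_list (map ?e v) * (sum_list (map ?f v) - n * rho_of q wt \<beta>)\<^sup>2)"
    unfolding powr_wt_sum[OF q] by (simp only: real_wt_sum)
  also have "\<dots> = n * (var_of q wt \<beta> * partZ q wt \<beta>) * partZ q wt \<beta> ^ (n - 1)"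
    unfolding sum_lists_prod_list_centered_sq[OF centered] sum_tilted_weight_sq_deviation[OF q]
    by (simp add: partZ_def)
  finally show ?thesis
    by (cases n) simp_all
qed

lemma entropy_of_eq:
  assumes q: "q > 1"
  shows "entropy_of q wt \<beta> = \<beta> * rho_of q wt \<beta> + log q (partZ q wt \<beta>)"
proof -
  let ?Z = "partZ q wt \<beta>" and ?P = "Pbeta q wt \<beta>"
  have Z: "?Z > 0" using q by (simp add: partZ_pos)
  have "?P a \<noteq> 0" for a using q by (simp add: Pbeta_pos less_imp_neq[symmetric])
  then have "entropy_of q wt \<beta> = - (\<Sum>a\<in>UNIV. ?P a * (- \<beta> * real (wt a) - log q ?Z))"
    using q Z by (simp add: entropy_of_def Pbeta_def log_divide)
  also have "\<dots> = \<beta> * rho_of q wt \<beta> + log q ?Z * (\<Sum>a\<in>UNIV. ?P a)"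
    by (simp add: rho_of_def algebra_simps sum_subtractf sum_distrib_left sum_distrib_right sum_negf)
  also have "(\<Sum>a\<in>UNIV. ?P a) = 1"
    using Z by (simp add: Pbeta_def partZ_def flip: sum_divide_distrib)
  finally show ?thesis by simp
qed

lemma var_of_pos:
  assumes "q > 0" and "wt a \<noteq> rho_of q wt \<beta>"
  shows "var_of q wt \<beta> > 0"
  unfolding var_of_def
  by (rule sum_pos2[of UNIV a])
    (use assms in \<open>simp_all add: Pbeta_pos less_imp_le zero_less_mult_iff\<close>)

lemma chebyshev_sum:
  fixes p X :: "'b \<Rightarrow> real"
  assumes D: "finite D" and p: "\<And>v. v \<in> D \<Longrightarrow> p v \<ge> 0" and \<delta>: "\<delta> > 0"
  shows "(\<Sum>v\<in>D. p v) - (\<Sum>v\<in>D. p v * (X v)\<^sup>2) / \<delta>\<^sup>2 \<le> (\<Sum>v | v \<in> D \<and> \<bar>X v\<bar> < \<delta>. p v)"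
proof -
  let ?G = "{v. v \<in> D \<and> \<bar>X v\<bar> < \<delta>}"
  have "(\<Sum>v\<in>D - ?G. p v) \<le> (\<Sum>v\<in>D - ?G. p v * (X v)\<^sup>2 / \<delta>\<^sup>2)"
  proof (rule sum_mono)
    fix v assume v: "v \<in> D - ?G"
    then have "\<delta> \<le> \<bar>X v\<bar>"
      by auto
    then have "\<delta>\<^sup>2 \<le> (X v)\<^sup>2"
      using \<delta> abs_le_square_iff[of \<delta> "X v"] by simp
    then have "1 \<le> (X v)\<^sup>2 / \<delta>\<^sup>2"
      using \<delta> by simp
    then show "p v \<le> p v * (X v)\<^sup>2 / \<delta>\<^sup>2"
      using mult_left_mono[OF _ p[of v]] v by fastforce
  qed
  also have "\<dots> \<le> (\<Sum>v\<in>D. p v * (X v)\<^sup>2 / \<delta>\<^sup>2)"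
    by (rule sum_mono2) (use D p in auto)
  finally show ?thesis
    using sum.subset_diff[of ?G D p] D by (simp add: sum_divide_distrib)
qed

lemma int_window_eq:
  assumes "\<delta> > 0"
  shows "{j::int. \<bar>real_of_int j\<bar> < \<delta>} = {1 - \<lceil>\<delta>\<rceil>..\<lceil>\<delta>\<rceil> - 1}"
proof (intro set_eqI)
  fix j :: int
  have "real_of_int j < \<delta> \<longleftrightarrow> j < \<lceil>\<delta>\<rceil>" "real_of_int (- j) < \<delta> \<longleftrightarrow> - j < \<lceil>\<delta>\<rceil>"
    by (simp_all only: less_ceiling_iff)
  then show "j \<in> {j. \<bar>real_of_int j\<bar> < \<delta>} \<longleftrightarrow> j \<in> {1 - \<lceil>\<delta>\<rceil>..\<lceil>\<delta>\<rceil> - 1}"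
    by (auto simp: abs_less_iff)
qed

lemma real_card_int_window:
  assumes "\<delta> > 0"
  shows "real (card {j::int. \<bar>real_of_int j\<bar> < \<delta>}) = 2 * real_of_int \<lceil>\<delta>\<rceil> - 1"
proof -
  have "\<lceil>\<delta>\<rceil> \<ge> 1" using assms by (simp add: le_ceiling_iff)
  then show ?thesis by (simp add: int_window_eq[OF assms])
qed

lemma exists_ge_average:
  fixes f :: "'b \<Rightarrow> real"
  assumes "finite J" and "J \<noteq> {}"
  shows "\<exists>j\<in>J. sum f J / card J \<le> f j"
proof -
  have "Max (f ` J) \<in> f ` J"
    using assms by (intro Max_in) auto
  then obtain j where j: "j \<in> J" "f j = Max (f ` J)"
    by (metis imageE)
  have "sum f J \<le> card J * f j"
    by (rule sum_bounded_above) (simp add: j assms)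
  moreover have "card J > 0"
    using assms by (simp add: card_gt_0_iff)
  ultimately have "sum f J / card J \<le> f j"
    by (simp add: pos_divide_le_eq mult.commute)
  with j show ?thesis
    by blast
qed

lemma sum_words_by_weight:
  fixes wt :: "'a::finite \<Rightarrow> nat" and f :: "int \<Rightarrow> real"
  assumes J: "finite J"
  shows "(\<Sum>v | length v = l \<and> int (wt_sum wt v) - t \<in> J. f (int (wt_sum wt v)))
         = (\<Sum>j\<in>J. real (card (sphere wt l (t + j))) * f (t + j))"
proof -
  let ?S = "{v::'a list. length v = l \<and> int (wt_sum wt v) - t \<in> J}"
  let ?g = "\<lambda>v. int (wt_sum wt v) - t"
  have S: "finite ?S"
    by (rule finite_subset[OF _ finite_lists_length[of l]]) auto
  have "{v \<in> ?S. ?g v = j} = sphere wt l (t + j)" if "j \<in> J" for j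
    using that by (auto simp: sphere_def)
  then have "(\<Sum>v\<in>{v \<in> ?S. ?g v = j}. f (int (wt_sum wt v))) = real (card (sphere wt l (t + j))) * f (t + j)"
    if "j \<in> J" for j
    using that by (simp add: sphere_def)
  moreover have "(\<Sum>j\<in>J. \<Sum>v\<in>{v \<in> ?S. ?g v = j}. f (int (wt_sum wt v))) = (\<Sum>v\<in>?S. f (int (wt_sum wt v)))"
    by (rule sum.group[OF S J]) auto
  ultimately show ?thesis
    by simp
qed

lemma exists_heavy_sphere:
  fixes wt :: "'a::finite \<Rightarrow> nat"
  assumes q: "q > 0" and t: "real l * rho_of q wt \<beta> = real_of_int t"
    and \<delta>: "\<delta> > 0" and var: "real l * var_of q wt \<beta> \<le> (1 - \<epsilon>) * \<delta>\<^sup>2"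
  shows "\<exists>j::int. \<bar>real_of_int j\<bar> < \<delta> \<and>
           \<epsilon> / (2 * real_of_int \<lceil>\<delta>\<rceil> - 1) * partZ q wt \<beta> ^ l
             \<le> real (card (sphere wt l (t + j))) * q powr (- \<beta> * real_of_int (t + j))"
proof -
  define Z where "Z = partZ q wt \<beta>"
  define J where "J = {j::int. \<bar>real_of_int j\<bar> < \<delta>}"
  define w where "w s = q powr (- \<beta> * real_of_int s)" for s :: int
  let ?D = "{v::'a list. length v = l}"
  let ?X = "\<lambda>v. real (wt_sum wt v) - real_of_int t"
  have "0 \<in> J"
    using \<delta> by (simp add: J_def)
  moreover have "finite J"
    using \<delta> by (simp add: J_def int_window_eq)
  ultimately have J: "finite J" "J \<noteq> {}"
    by blast+
  have Z: "Z ^ l > 0"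
    using q by (simp add: Z_def partZ_pos)
  have "real l * var_of q wt \<beta> / \<delta>\<^sup>2 \<le> 1 - \<epsilon>"
    using var \<delta> by (simp add: divide_le_eq)
  then have "real l * var_of q wt \<beta> / \<delta>\<^sup>2 * Z ^ l \<le> (1 - \<epsilon>) * Z ^ l"
    using Z by (intro mult_right_mono) auto
  then have "\<epsilon> * Z ^ l \<le> Z ^ l - real l * var_of q wt \<beta> / \<delta>\<^sup>2 * Z ^ l"
    by (simp add: left_diff_distrib)
  also have "\<dots> = (\<Sum>v\<in>?D. w (wt_sum wt v)) - (\<Sum>v\<in>?D. w (wt_sum wt v) * (?X v)\<^sup>2) / \<delta>\<^sup>2"
    using sum_words_tilted_weight[OF q, where n = l and wt = wt and \<beta> = \<beta>]
      sum_words_tilted_sq_deviation[OF q, where n = l and wt = wt and \<beta> = \<beta>, unfolded t]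
    by (simp add: w_def Z_def)
  also have "\<dots> \<le> (\<Sum>v | v \<in> ?D \<and> \<bar>?X v\<bar> < \<delta>. w (wt_sum wt v))"
    by (rule chebyshev_sum) (use \<delta> finite_lists_length in \<open>simp_all add: w_def\<close>)
  also have "\<dots> = (\<Sum>j\<in>J. real (card (sphere wt l (t + j))) * w (t + j))"
    unfolding sum_words_by_weight[OF J(1), symmetric] by (simp add: J_def)
  finally obtain j where "j \<in> J" and "\<epsilon> * Z ^ l / card J \<le> real (card (sphere wt l (t + j))) * w (t + j)"
    using exists_ge_average[OF J] by (meson divide_right_mono of_nat_0_le_iff order_trans)
  then show ?thesis
    using real_card_int_window[OF \<delta>] by (auto simp: J_def Z_def w_def)
qed

lemma exists_sphere_log_card_ge_rhs_bound:
  fixes wt :: "'a::finite \<Rightarrow> nat"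
  assumes q: "q > 1" and t: "real l * rho_of q wt \<beta> = real_of_int t"
    and \<epsilon>: "0 < \<epsilon>" "\<epsilon> < 1" and \<delta>: "delta_of q wt \<beta> \<epsilon> l > 0"
  shows "\<exists>j::int. - delta_of q wt \<beta> \<epsilon> l < real_of_int j \<and> real_of_int j < delta_of q wt \<beta> \<epsilon> l
           \<and> card (sphere wt l (t + j)) > 0
           \<and> log q (real (card (sphere wt l (t + j)))) / real l \<ge> rhs_bound q wt \<beta> \<epsilon> l"
proof -
  define \<delta> where "\<delta> = delta_of q wt \<beta> \<epsilon> l"
  define Z where "Z = partZ q wt \<beta>"
  define m where "m = 2 * real_of_int \<lceil>\<delta>\<rceil> - 1"
  have \<delta>_pos: "\<delta> > 0"
    using \<delta> by (simp add: \<delta>_def)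
  have l: "real l > 0" and var: "var_of q wt \<beta> > 0"
    using \<delta> \<epsilon> by (auto simp: delta_of_def zero_less_mult_iff zero_less_divide_iff)
  have "real l * var_of q wt \<beta> \<le> (1 - \<epsilon>) * \<delta>\<^sup>2"
    using var \<epsilon> by (simp add: \<delta>_def delta_of_def power_divide power_mult_distrib)
  then obtain j where j: "\<bar>real_of_int j\<bar> < \<delta>"
    and heavy: "\<epsilon> / m * Z ^ l \<le> real (card (sphere wt l (t + j))) * q powr (- \<beta> * real_of_int (t + j))"
    using exists_heavy_sphere[OF _ t \<delta>_pos] q by (auto simp: m_def Z_def)
  define N where "N = real (card (sphere wt l (t + j)))"
  have "1 \<le> real_of_int \<lceil>\<delta>\<rceil>"
    using \<delta>_pos by (simp add: le_ceiling_iff)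
  then have m: "m > 0"
    unfolding m_def by linarith
  have Z: "Z > 0"
    using q by (simp add: Z_def partZ_pos)
  have lower_pos: "\<epsilon> / m * Z ^ l > 0"
    using \<epsilon> m Z by simp
  then have "0 < N * q powr (- \<beta> * real_of_int (t + j))"
    using heavy unfolding N_def by linarith
  then have N: "N > 0"
    using q by (simp add: zero_less_mult_iff N_def)
  have "log q (\<epsilon> / m * Z ^ l) \<le> log q (N * q powr (- \<beta> * real_of_int (t + j)))"
    using heavy lower_pos q by (simp add: N_def)
  then have "real l * log q Z - log q (m / \<epsilon>) \<le> log q N - \<beta> * real_of_int (t + j)"
    using q \<epsilon> m Z N by (simp add: log_mult log_divide log_nat_power)
  moreover have "- \<bar>\<beta>\<bar> * \<delta> \<le> \<beta> * real_of_int j"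
    using j mult_left_mono[of "\<bar>real_of_int j\<bar>" \<delta> "\<bar>\<beta>\<bar>"] abs_le_iff[of "\<beta> * real_of_int j"]
    by (auto simp: abs_mult)
  moreover have "real l * entropy_of q wt \<beta> = \<beta> * real_of_int t + real l * log q Z"
    using q t by (simp add: entropy_of_eq Z_def algebra_simps flip: t)
  ultimately have "real l * rhs_bound q wt \<beta> \<epsilon> l \<le> log q N"
    using l by (simp add: rhs_bound_def \<delta>_def m_def algebra_simps)
  then show ?thesis
    using j N l by (intro exI[of _ j]) (auto simp: \<delta>_def N_def abs_less_iff field_simps)
qed

lemma log_window_size_bounds:
  assumes q: "q > 1" and x: "x > 0" and \<epsilon>: "0 < \<epsilon>" "\<epsilon> \<le> 1"
  shows "0 \<le> log q ((2 * real_of_int \<lceil>x\<rceil> - 1) / \<epsilon>)"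
    and "log q ((2 * real_of_int \<lceil>x\<rceil> - 1) / \<epsilon>) \<le> log q ((2 * x + 1) / \<epsilon>)"
proof -
  have ceil: "1 \<le> real_of_int \<lceil>x\<rceil>" "real_of_int \<lceil>x\<rceil> \<le> x + 1"
    using x by (simp_all add: le_ceiling_iff)
  then have "\<epsilon> \<le> 2 * real_of_int \<lceil>x\<rceil> - 1"
    using \<epsilon> by linarith
  then have lower: "1 \<le> (2 * real_of_int \<lceil>x\<rceil> - 1) / \<epsilon>"
    using \<epsilon> by (simp add: le_divide_eq)
  have upper: "(2 * real_of_int \<lceil>x\<rceil> - 1) / \<epsilon> \<le> (2 * x + 1) / \<epsilon>"
    using ceil(2) \<epsilon> by (intro divide_right_mono) linarith+
  show "0 \<le> log q ((2 * real_of_int \<lceil>x\<rceil> - 1) / \<epsilon>)"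
    using lower q by simp
  show "log q ((2 * real_of_int \<lceil>x\<rceil> - 1) / \<epsilon>) \<le> log q ((2 * x + 1) / \<epsilon>)"
    using lower upper q by simp
qed

lemma rhs_bound_tendsto_entropy:
  assumes q: "q > 1" and \<epsilon>: "0 < \<epsilon>" "\<epsilon> < 1" and var: "var_of q wt \<beta> > 0"
  shows "rhs_bound q wt \<beta> \<epsilon> \<longlonglongrightarrow> entropy_of q wt \<beta>"
proof -
  define c where "c = sqrt (var_of q wt \<beta>) / sqrt (1 - \<epsilon>)"
  define H where "H = entropy_of q wt \<beta>"
  define upper where "upper l = H - \<bar>\<beta>\<bar> * (sqrt (real l) * c) / real l" for l :: nat
  define lower where "lower l = upper l - log q ((2 * (sqrt (real l) * c) + 1) / \<epsilon>) / real l" for l :: nat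
  have c: "c > 0"
    using var \<epsilon> by (simp add: c_def)
  have rhs: "rhs_bound q wt \<beta> \<epsilon> l
      = upper l - log q ((2 * real_of_int \<lceil>sqrt (real l) * c\<rceil> - 1) / \<epsilon>) / real l" for l
    by (simp add: rhs_bound_def upper_def H_def delta_of_def c_def)
  have bounds: "lower l \<le> rhs_bound q wt \<beta> \<epsilon> l \<and> rhs_bound q wt \<beta> \<epsilon> l \<le> upper l" if "l \<ge> 1" for l
    using log_window_size_bounds[OF q _ \<epsilon>(1), of "sqrt (real l) * c"] that c \<epsilon>
    by (simp add: rhs lower_def divide_right_mono)
  have "eventually (\<lambda>l. lower l \<le> rhs_bound q wt \<beta> \<epsilon> l) sequentially"
    and "eventually (\<lambda>l. rhs_bound q wt \<beta> \<epsilon> l \<le> upper l) sequentially"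
    using bounds unfolding eventually_sequentially by blast+
  moreover have "lower \<longlonglongrightarrow> H"
    using q \<epsilon> c unfolding lower_def upper_def by real_asymp
  moreover have "upper \<longlonglongrightarrow> H"
    unfolding upper_def by real_asymp
  ultimately show ?thesis
    unfolding H_def by (rule tendsto_sandwich)
qed

theorem mainTheorem8:
  fixes q :: real and wt :: "'a::{finite, ab_group_add} \<Rightarrow> nat"
    and \<rho> \<beta> \<epsilon> :: real
  assumes q: "q > 1"
    and card: "CARD('a) \<ge> 2"
    and wt0: "\<And>a. wt a = 0 \<longleftrightarrow> a = 0"
    and rho_pos: "0 < \<rho>" and rho_lt: "\<rho> < real (mu wt)"
    and beta: "rho_of q wt \<beta> = \<rho>"
    and eps: "0 < \<epsilon>" "\<epsilon> < 1"
  shows "(\<forall>(l::nat) (t::int). real l * \<rho> = real_of_int t \<longrightarrow> delta_of q wt \<beta> \<epsilon> l > 0 \<longrightarrow>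
            (\<exists>j::int. - delta_of q wt \<beta> \<epsilon> l < real_of_int j \<and> real_of_int j < delta_of q wt \<beta> \<epsilon> l
               \<and> card (sphere wt l (t + j)) > 0
               \<and> log q (real (card (sphere wt l (t + j)))) / real l \<ge> rhs_bound q wt \<beta> \<epsilon> l))
       \<and> filterlim (rhs_bound q wt \<beta> \<epsilon>) (nhds (entropy_of q wt \<beta>))
           (inf sequentially (principal {l. real l * \<rho> \<in> \<int>}))"
  (* card and rho_lt only guarantee that beta exists; the proof does not need them. *)
proof -
  have "var_of q wt \<beta> > 0"
    by (rule var_of_pos[of q wt 0]) (use q wt0[of 0] rho_pos beta in auto)
  then show ?thesis
    using exists_sphere_log_card_ge_rhs_bound[OF q _ eps] beta
      filterlim_mono[OF rhs_bound_tendsto_entropy[OF q eps] order_refl inf_le1]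
    by blast
qed

end
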